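(* Let $\lambda>0$, $b>0$, $1<q<p$ and $\lambda_1<a<\lambda^*$. Then there exist $\alpha>0$ and $\rho>0$ such that $I_{\lambda,s}(u)\ge\alpha$ for every $u\in W$ with $\|u\|_{X_p^s}=\rho$.
   Context: $\Omega\subset\mathbb{R}^N$ bounded smooth domain, $s\in(0,1)$, $p>1$, $N>sp$, $p_s^*=\frac{Np}{N-sp}$. $X_p^s=\{u\in W^{s,p}(\mathbb{R}^N): u=0 \text{ a.e. in } \mathbb{R}^N\setminus\Omega\}$ with norm $\|u\|_{X_p^s}=\big(\int_{\mathbb{R}^{2N}}\frac{|u(x)-u(y)|^p}{|x-y|^{N+sp}}dxdy\big)^{1/p}$. $A(u)\cdot v=\int_{\mathbb{R}^{2N}}\frac{|u(x)-u(y)|^{p-2}(u(x)-u(y))(v(x)-v(y))}{|x-y|^{N+sp}}dxdy$. $\lambda_1$ is the first eigenvalue of the fractional $p$-Laplacian on $X_p^s$ and $\varphi_1$ its positive $L^p$-normalized eigenfunction. $W=\{u\in X_p^s: A(\varphi_1)\cdot u=0\}$, $\lambda^*=\inf\{\|u\|_{X_p^s}^p:u\in W,\|u\|^p_{L^p(\Omega)}=1\}$. $I_{\lambda,s}(u)=\frac1p\|u\|_{X_p^s}^p+\frac\lambda q\int_\Omega|u|^q-\frac ap\int_\Omega|u|^p-\frac{b}{p_s^*}\int_\Omega(u^+)^{p_s^*}$, $u^+=\max\{u,0\}$. *)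

theory Defs
  imports "HOL-Analysis.Analysis"
begin

definition smooth_on :: "'a set \<Rightarrow> ('a::euclidean_space \<Rightarrow> real) \<Rightarrow> bool" where
  "smooth_on U g \<longleftrightarrow> (\<exists>F. g \<in> F \<and> (\<forall>f\<in>F. continuous_on U f \<and> f differentiable_on U \<and>
      (\<forall>i\<in>Basis. (\<lambda>x. frechet_derivative f (at x) i) \<in> F)))"

definition smooth_bounded_domain :: "'a::euclidean_space set \<Rightarrow> bool" where
  "smooth_bounded_domain \<Omega> \<longleftrightarrow> open \<Omega> \<and> bounded \<Omega> \<and> connected \<Omega> \<and> \<Omega> \<noteq> {} \<and>
     (\<exists>U g. open U \<and> frontier \<Omega> \<subseteq> U \<and> smooth_on U g \<and> (\<forall>x\<in>U. x \<in> \<Omega> \<longleftrightarrow> g x < 0) \<and>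
        (\<forall>x\<in>frontier \<Omega>. frechet_derivative g (at x) \<noteq> (\<lambda>_. 0)))"

text \<open>Gagliardo seminorm to the power p (N = DIM('a)).\<close>
definition gagliardo :: "real \<Rightarrow> real \<Rightarrow> ('a::euclidean_space \<Rightarrow> real) \<Rightarrow> ennreal" where
  "gagliardo p s u = (\<integral>\<^sup>+ z. ennreal (\<bar>u (fst z) - u (snd z)\<bar> powr p /
        norm (fst z - snd z) powr (real DIM('a) + s * p)) \<partial>(lborel \<Otimes>\<^sub>M lborel))"

definition Xps :: "'a::euclidean_space set \<Rightarrow> real \<Rightarrow> real \<Rightarrow> ('a \<Rightarrow> real) set" where
  "Xps \<Omega> p s = {u. u \<in> borel_measurable lborel \<and> integrable lborel (\<lambda>x. \<bar>u x\<bar> powr p) \<and>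
       gagliardo p s u < \<infinity> \<and> (AE x in lborel. x \<notin> \<Omega> \<longrightarrow> u x = 0)}"

definition Xnorm :: "real \<Rightarrow> real \<Rightarrow> ('a::euclidean_space \<Rightarrow> real) \<Rightarrow> real" where
  "Xnorm p s u = enn2real (gagliardo p s u) powr (1 / p)"

definition Aop :: "real \<Rightarrow> real \<Rightarrow> ('a::euclidean_space \<Rightarrow> real) \<Rightarrow> ('a \<Rightarrow> real) \<Rightarrow> real" where
  "Aop p s u v = (\<integral> z. \<bar>u (fst z) - u (snd z)\<bar> powr (p - 2) * (u (fst z) - u (snd z)) *
        (v (fst z) - v (snd z)) / norm (fst z - snd z) powr (real DIM('a) + s * p)
        \<partial>(lborel \<Otimes>\<^sub>M lborel))"

definition Lpp :: "'a::euclidean_space set \<Rightarrow> real \<Rightarrow> ('a \<Rightarrow> real) \<Rightarrow> real" where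
  "Lpp \<Omega> p u = (LINT x:\<Omega>|lborel. \<bar>u x\<bar> powr p)"

definition lambda1 :: "'a::euclidean_space set \<Rightarrow> real \<Rightarrow> real \<Rightarrow> real" where
  "lambda1 \<Omega> p s = Inf {Xnorm p s u powr p | u. u \<in> Xps \<Omega> p s \<and> Lpp \<Omega> p u = 1}"

definition first_eigenfunction :: "'a::euclidean_space set \<Rightarrow> real \<Rightarrow> real \<Rightarrow> ('a \<Rightarrow> real) \<Rightarrow> bool" where
  "first_eigenfunction \<Omega> p s \<phi> \<longleftrightarrow> \<phi> \<in> Xps \<Omega> p s \<and> Lpp \<Omega> p \<phi> = 1 \<and>
     (AE x in lborel. x \<in> \<Omega> \<longrightarrow> \<phi> x > 0) \<and>
     (\<forall>v\<in>Xps \<Omega> p s. Aop p s \<phi> v = lambda1 \<Omega> p s * (LINT x:\<Omega>|lborel. \<bar>\<phi> x\<bar> powr (p - 2) * \<phi> x * v x))"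

definition Wsp :: "'a::euclidean_space set \<Rightarrow> real \<Rightarrow> real \<Rightarrow> ('a \<Rightarrow> real) \<Rightarrow> ('a \<Rightarrow> real) set" where
  "Wsp \<Omega> p s \<phi> = {u \<in> Xps \<Omega> p s. Aop p s \<phi> u = 0}"

definition lambda_star :: "'a::euclidean_space set \<Rightarrow> real \<Rightarrow> real \<Rightarrow> ('a \<Rightarrow> real) \<Rightarrow> real" where
  "lambda_star \<Omega> p s \<phi> = Inf {Xnorm p s u powr p | u. u \<in> Wsp \<Omega> p s \<phi> \<and> Lpp \<Omega> p u = 1}"

definition crit_exp :: "'a::euclidean_space itself \<Rightarrow> real \<Rightarrow> real \<Rightarrow> real" where
  "crit_exp _ p s = real DIM('a) * p / (real DIM('a) - s * p)"

definition Ifun :: "'a::euclidean_space set \<Rightarrow> real \<Rightarrow> real \<Rightarrow> real \<Rightarrow> real \<Rightarrow> real \<Rightarrow> real \<Rightarrow> ('a \<Rightarrow> real) \<Rightarrow> real" where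
  "Ifun \<Omega> p s q lam a b u =
     Xnorm p s u powr p / p + lam / q * (LINT x:\<Omega>|lborel. \<bar>u x\<bar> powr q)
     - a / p * (LINT x:\<Omega>|lborel. \<bar>u x\<bar> powr p)
     - b / crit_exp TYPE('a) p s * (LINT x:\<Omega>|lborel. max (u x) 0 powr crit_exp TYPE('a) p s)"

end

theory Submission
  imports Defs
begin

text \<open>
  For u in W the definition of lambda* gives, by scaling, lambda* * Lpp u <= ||u||^p, so on the
  sphere ||u|| = rho the principal part of I is at least (1 - a / lambda*) rho^p / p, while the
  lam-term is nonnegative. The critical term is at most b C rho^(p*) / p* by the fractional Sobolev
  inequality for the positive part, int (u^+)^(p*) <= C ||u||^(p*). Since p* > p, the difference
  is positive for small rho.

  The Sobolev inequality is proved by the level-set argument of Di Nezza, Palatucci and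
  Valdinoci (Hitchhiker's guide, Sect. 6). Let f be bounded and nonnegative with superlevel sets
  A_k = {f > M nu^k} of measures a_k. Points of A_(k+1) - A_k and points outside A_(k+2) have
  f-values at least M nu^(k+1) (1 - nu) apart, so the Gagliardo seminorm dominates the sum of
  nu^(pk) (a_(k+1) - a_k) a_(k+2)^(-sp/N), whereas int f^(p*) is at most the (N/(N-sp))-th power
  of M^p times the sum of nu^(pk) a_(k+1)^((N-sp)/N). A discrete estimate bounds the second sum by
  the first as soon as sp/N < nu^p. General u are reduced to this case by truncating u^+.
\<close>

lemma powr_diff_ge_tangent:
  fixes x y \<theta> :: real
  assumes "0 \<le> x" "x \<le> y" "0 < \<theta>" "\<theta> < 1"
  shows "(1 - \<theta>) * (y - x) * y powr (-\<theta>) \<le> y powr (1 - \<theta>) - x powr (1 - \<theta>)"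
proof (cases "x = 0")
  case True
  show ?thesis
  proof (cases "y = 0")
    case False
    then have "y powr (1 - \<theta>) = y * y powr (-\<theta>)"
      using assms powr_add[of y 1 "-\<theta>"] by simp
    moreover have "(1 - \<theta>) * y * y powr (-\<theta>) \<le> y * y powr (-\<theta>)"
      using assms by (intro mult_right_mono) (auto simp: mult_left_le_one_le)
    ultimately show ?thesis using assms True by simp
  qed (use True in simp)
next
  case False
  then have x: "0 < x" and y: "0 < y" using assms by auto
  have "x powr (1 - \<theta>) * y powr \<theta> \<le> (1 - \<theta>) * x + \<theta> * y"
    using Youngs_inequality_0[of "1 - \<theta>" \<theta> x y] assms x y by simp
  moreover have w: "y powr \<theta> * y powr (-\<theta>) = 1" "y * y powr (-\<theta>) = y powr (1 - \<theta>)"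
    using y powr_add[of y 1 "-\<theta>"] by (simp_all add: powr_add [symmetric])
  ultimately have "x powr (1 - \<theta>) \<le> ((1 - \<theta>) * x + \<theta> * y) * y powr (-\<theta>)"
    by (metis mult.assoc mult.right_neutral mult_right_mono powr_ge_zero)
  then show ?thesis by (simp add: algebra_simps w)
qed

lemma sum_geometric_weighted_partial_sums:
  fixes r :: "nat \<Rightarrow> real"
  shows "(1 - u) * (\<Sum>n<N. u ^ n * (\<Sum>j<n. r j)) = (\<Sum>j<N. r j * (u ^ Suc j - u ^ N))"
proof (induction N)
  case (Suc N)
  have "(\<Sum>j<Suc N. r j * (u ^ Suc j - u ^ Suc N))
      = (\<Sum>j<N. r j * (u ^ Suc j - u ^ N)) + (1 - u) * u ^ N * (\<Sum>j<N. r j)"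
    by (simp add: sum_distrib_left algebra_simps sum.distrib [symmetric])
  with Suc.IH show ?case by (simp add: algebra_simps)
qed simp

lemma summation_by_parts_geometric:
  fixes b :: "nat \<Rightarrow> real"
  assumes "b 0 = 0"
  shows "(\<Sum>n<N. u ^ n * (b (Suc n) - b n)) = (1 - u) * (\<Sum>n<N. u ^ n * b (Suc n)) + u ^ N * b N"
  using assms by (induction N) (simp_all add: algebra_simps)

lemma incseq_mult_powr_le_sum:
  fixes a :: "nat \<Rightarrow> real"
  assumes mono: "incseq a" and a0: "a 0 = 0" and "0 < \<theta>"
  shows "a N * a (Suc N) powr (-\<theta>) \<le> (\<Sum>j<N. (a (Suc j) - a j) * a (Suc (Suc j)) powr (-\<theta>))"
proof -
  have "a N = (\<Sum>j<N. a (Suc j) - a j)"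
    using a0 by (simp add: sum_lessThan_telescope)
  then have "a N * a (Suc N) powr (-\<theta>) = (\<Sum>j<N. (a (Suc j) - a j) * a (Suc N) powr (-\<theta>))"
    by (simp add: sum_distrib_right)
  also have "\<dots> \<le> (\<Sum>j<N. (a (Suc j) - a j) * a (Suc (Suc j)) powr (-\<theta>))"
  proof (intro sum_mono)
    fix j assume j: "j \<in> {..<N}"
    have step: "a j \<le> a (Suc j)" "a (Suc j) \<le> a (Suc (Suc j))"
      using mono by (auto simp: incseq_Suc_iff)
    show "(a (Suc j) - a j) * a (Suc N) powr (-\<theta>) \<le> (a (Suc j) - a j) * a (Suc (Suc j)) powr (-\<theta>)"
    proof (cases "a j < a (Suc j)")
      case True
      have "0 \<le> a j" using mono a0 by (metis incseq_def zero_le)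
      then have "0 < a (Suc (Suc j))" using True step by linarith
      moreover have "a (Suc (Suc j)) \<le> a (Suc N)" using mono j by (simp add: incseq_def)
      ultimately show ?thesis
        using step \<open>0 < \<theta>\<close> by (intro mult_left_mono powr_mono2') auto
    qed (use step in simp)
  qed
  finally show ?thesis .
qed

lemma level_sum_estimate:
  fixes a :: "nat \<Rightarrow> real"
  assumes mono: "incseq a" and a0: "a 0 = 0" and \<theta>: "0 < \<theta>" "\<theta> < 1" and u: "0 < u" "u < 1"
  shows "(1 - (1 - u) / (1 - \<theta>)) * (\<Sum>n<N. u ^ n * a (Suc n) powr (1 - \<theta>))
    \<le> u / (1 - u) * (\<Sum>n<N. u ^ n * ((a (Suc n) - a n) * a (Suc (Suc n)) powr (-\<theta>)))
      + u ^ N * a N powr (1 - \<theta>) / (1 - \<theta>)"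
proof -
  define S where "S = (\<Sum>n<N. u ^ n * a (Suc n) powr (1 - \<theta>))"
  define r where "r j = (a (Suc j) - a j) * a (Suc (Suc j)) powr (-\<theta>)" for j
  define b where "b n = a n powr (1 - \<theta>)" for n
  have a_nonneg: "0 \<le> a n" for n using mono a0 by (metis incseq_def zero_le)
  have a_step: "a n \<le> a (Suc n)" for n using mono by (simp add: incseq_Suc_iff)
  have r_nonneg: "0 \<le> r j" for j using a_step[of j] by (simp add: r_def)
  have "a (Suc n) powr (1 - \<theta>) \<le> a n * a (Suc n) powr (-\<theta>) + (b (Suc n) - b n) / (1 - \<theta>)" for n
  proof -
    have "a (Suc n) powr (1 - \<theta>) = a (Suc n) * a (Suc n) powr (-\<theta>)"
      using a_nonneg[of "Suc n"] powr_add[of "a (Suc n)" 1 "-\<theta>"]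
      by (cases "a (Suc n) = 0") simp_all
    moreover have "(1 - \<theta>) * (a (Suc n) - a n) * a (Suc n) powr (-\<theta>) \<le> b (Suc n) - b n"
      unfolding b_def using a_nonneg a_step \<theta> by (rule powr_diff_ge_tangent)
    ultimately show ?thesis using \<theta> by (simp add: field_simps)
  qed
  then have "S \<le> (\<Sum>n<N. u ^ n * (a n * a (Suc n) powr (-\<theta>) + (b (Suc n) - b n) / (1 - \<theta>)))"
    unfolding S_def using u by (intro sum_mono mult_left_mono) auto
  also have "\<dots> = (\<Sum>n<N. u ^ n * (a n * a (Suc n) powr (-\<theta>)))
      + (\<Sum>n<N. u ^ n * (b (Suc n) - b n)) / (1 - \<theta>)"
    by (simp add: algebra_simps sum.distrib sum_divide_distrib)
  also have "(\<Sum>n<N. u ^ n * (b (Suc n) - b n)) = (1 - u) * S + u ^ N * b N"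
    using summation_by_parts_geometric[where b=b and u=u and N=N] a0 by (simp add: S_def b_def)
  also have "(\<Sum>n<N. u ^ n * (a n * a (Suc n) powr (-\<theta>))) \<le> (\<Sum>n<N. u ^ n * (\<Sum>j<n. r j))"
    unfolding r_def using incseq_mult_powr_le_sum[OF mono a0 \<theta>(1)] u
    by (intro sum_mono mult_left_mono) auto
  also have "\<dots> = (\<Sum>j<N. r j * (u ^ Suc j - u ^ N)) / (1 - u)"
    using sum_geometric_weighted_partial_sums[where r=r and u=u and N=N] u by (simp add: field_simps)
  also have "\<dots> \<le> (\<Sum>j<N. r j * u ^ Suc j) / (1 - u)"
    using u r_nonneg by (intro divide_right_mono sum_mono mult_left_mono) auto
  also have "\<dots> = u / (1 - u) * (\<Sum>n<N. u ^ n * r n)"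
    by (simp add: sum_distrib_left sum_divide_distrib mult_ac)
  finally have "S \<le> u / (1 - u) * (\<Sum>n<N. u ^ n * r n) + ((1 - u) * S + u ^ N * b N) / (1 - \<theta>)"
    by simp
  moreover have "((1 - u) * S + u ^ N * b N) / (1 - \<theta>) = (1 - u) / (1 - \<theta>) * S + u ^ N * b N / (1 - \<theta>)"
    by (simp add: add_divide_distrib)
  ultimately have "(1 - (1 - u) / (1 - \<theta>)) * S \<le> u / (1 - u) * (\<Sum>n<N. u ^ n * r n) + u ^ N * b N / (1 - \<theta>)"
    by (simp add: algebra_simps)
  then show ?thesis by (simp only: S_def r_def b_def)
qed

lemma sum_powr_le_powr_sum:
  fixes x :: "'i \<Rightarrow> real"
  assumes "finite A" and x: "\<And>i. i \<in> A \<Longrightarrow> 0 \<le> x i" and "1 \<le> r"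
  shows "(\<Sum>i\<in>A. x i powr r) \<le> (\<Sum>i\<in>A. x i) powr r"
proof -
  define S where "S = (\<Sum>i\<in>A. x i)"
  have "x i powr r \<le> x i * S powr (r - 1)" if "i \<in> A" for i
  proof (cases "x i = 0")
    case False
    then have "0 < x i" using x that by (simp add: order_le_neq_trans)
    moreover have "x i \<le> S" unfolding S_def using assms that by (intro member_le_sum) auto
    ultimately have "x i * x i powr (r - 1) \<le> x i * S powr (r - 1)"
      using \<open>1 \<le> r\<close> by (intro mult_left_mono powr_mono2) auto
    then show ?thesis using \<open>0 < x i\<close> by (simp add: powr_mult_base)
  qed simp
  then have "(\<Sum>i\<in>A. x i powr r) \<le> (\<Sum>i\<in>A. x i * S powr (r - 1))"
    by (rule sum_mono)
  also have "\<dots> = S * S powr (r - 1)"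
    by (simp add: S_def sum_distrib_right)
  also have "\<dots> = S powr r"
    using \<open>1 \<le> r\<close> sum_nonneg[of A x] x by (cases "S = 0") (simp_all add: S_def powr_mult_base)
  finally show ?thesis by (simp add: S_def)
qed

text \<open>At least half of the ball around x of measure 2 |E| lies outside E.\<close>

lemma nn_integral_kernel_outside_ge:
  fixes x :: "'a::euclidean_space" and E :: "'a set" and g :: "'a \<Rightarrow> ennreal"
  assumes E: "E \<in> sets lborel" "emeasure lborel E < \<infinity>" "0 < measure lborel E" and "x \<in> E"
    and c: "0 \<le> c" and \<beta>: "0 < \<beta>"
    and g: "\<And>y. y \<notin> E \<Longrightarrow> ennreal (c / norm (x - y) powr \<beta>) \<le> g y"
  shows "ennreal (c * (2 / unit_ball_vol DIM('a)) powr (-\<beta> / DIM('a)) * measure lborel E powr (1 - \<beta> / DIM('a)))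
    \<le> (\<integral>\<^sup>+y. g y \<partial>lborel)"
proof -
  define e where "e = measure lborel E"
  define \<omega> where "\<omega> = unit_ball_vol DIM('a)"
  define n where "n = real DIM('a)"
  define R where "R = (2 * e / \<omega>) powr (1 / n)"
  have e: "0 < e" and \<omega>: "0 < \<omega>" and n: "0 < n"
    using E by (simp_all add: e_def \<omega>_def n_def)
  have R: "0 < R" using e \<omega> by (simp add: R_def)
  have "R ^ DIM('a) = R powr n" using R by (simp add: n_def powr_realpow)
  also have "\<dots> = 2 * e / \<omega>" unfolding R_def using e \<omega> n by (simp add: powr_powr)
  finally have ball: "measure lborel (ball x R) = 2 * e"
    using R \<omega> by (simp add: content_ball flip: \<omega>_def)
  have E_fin: "E \<in> fmeasurable lborel" using E by (simp add: fmeasurable_def)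
  have "ball x R \<in> fmeasurable lborel"
    using R by (simp add: fmeasurable_def emeasure_ball)
  then have "e \<le> measure lborel (ball x R - E)"
    using measure_diff_le_measure_setdiff[OF _ E_fin, of "ball x R"] ball by (simp add: e_def)
  have "y \<in> ball x R - E \<Longrightarrow> ennreal (c / R powr \<beta>) \<le> g y" for y
  proof -
    assume y: "y \<in> ball x R - E"
    then have "0 < norm (x - y)" and "norm (x - y) < R"
      using \<open>x \<in> E\<close> by (auto simp: dist_norm)
    then have "c / R powr \<beta> \<le> c / norm (x - y) powr \<beta>"
      using c \<beta> by (intro divide_left_mono powr_mono2 mult_pos_pos) auto
    then show ?thesis using g y by (meson DiffD2 ennreal_leI order_trans)
  qed
  then have "(\<integral>\<^sup>+y. ennreal (c / R powr \<beta>) * indicator (ball x R - E) y \<partial>lborel) \<le> (\<integral>\<^sup>+y. g y \<partial>lborel)"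
    by (intro nn_integral_mono) (simp split: split_indicator)
  moreover have "(\<integral>\<^sup>+y. ennreal (c / R powr \<beta>) * indicator (ball x R - E) y \<partial>lborel)
      = ennreal (c / R powr \<beta> * measure lborel (ball x R - E))"
    using fmeasurable.Diff[OF \<open>ball x R \<in> fmeasurable lborel\<close> E_fin] c R
    by (subst nn_integral_cmult_indicator) (auto simp: emeasure_eq_measure2 ennreal_mult [symmetric])
  moreover have "c / R powr \<beta> * e \<le> c / R powr \<beta> * measure lborel (ball x R - E)"
    using \<open>e \<le> measure lborel (ball x R - E)\<close> c R by (intro mult_left_mono) auto
  moreover have "c / R powr \<beta> * e = c * (2 / \<omega>) powr (-\<beta> / n) * e powr (1 - \<beta> / n)"
  proof -
    have "R powr \<beta> = (2 / \<omega>) powr (\<beta> / n) * e powr (\<beta> / n)"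
      unfolding R_def using e \<omega> by (simp add: powr_powr powr_mult [symmetric])
    moreover have "e powr (1 - \<beta> / n) = e / e powr (\<beta> / n)"
      using e by (simp add: powr_diff)
    ultimately show ?thesis using e \<omega> by (simp add: powr_minus field_simps)
  qed
  ultimately show ?thesis
    unfolding e_def \<omega>_def n_def by (metis ennreal_leI order_trans)
qed

lemma gagliardo_eq_iterated:
  fixes f :: "'a::euclidean_space \<Rightarrow> real" and p s :: real
  assumes "f \<in> borel_measurable lborel"
  shows "gagliardo p s f = (\<integral>\<^sup>+x. \<integral>\<^sup>+y. ennreal (\<bar>f x - f y\<bar> powr p / norm (x - y) powr (DIM('a) + s * p)) \<partial>lborel \<partial>lborel)"
proof -
  have "(\<lambda>z. ennreal (\<bar>f (fst z) - f (snd z)\<bar> powr p / norm (fst z - snd z) powr (DIM('a) + s * p)))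
      \<in> borel_measurable (lborel \<Otimes>\<^sub>M lborel)"
    using assms by measurable
  then show ?thesis
    unfolding gagliardo_def by (simp add: lborel.nn_integral_fst [symmetric])
qed

lemma gagliardo_comp_contraction_le:
  assumes "0 \<le> p" and contraction: "\<And>a b. \<bar>g a - g b\<bar> \<le> \<bar>a - b\<bar>"
  shows "gagliardo p s (\<lambda>x. g (f x)) \<le> gagliardo p s f"
  unfolding gagliardo_def
  using assms by (intro nn_integral_mono ennreal_leI divide_right_mono powr_mono2) auto

lemma gagliardo_cmult:
  fixes f :: "'a::euclidean_space \<Rightarrow> real" and c :: real
  assumes "f \<in> borel_measurable lborel" and "0 < c"
  shows "gagliardo p s (\<lambda>x. c * f x) = ennreal (c powr p) * gagliardo p s f"
proof -
  have "\<bar>c * f x - c * f y\<bar> powr p = c powr p * \<bar>f x - f y\<bar> powr p" for x y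
    using \<open>0 < c\<close> by (simp add: right_diff_distrib [symmetric] abs_mult powr_mult)
  moreover have "(\<lambda>z. ennreal (\<bar>f (fst z) - f (snd z)\<bar> powr p / norm (fst z - snd z) powr (DIM('a) + s * p)))
      \<in> borel_measurable (lborel \<Otimes>\<^sub>M lborel)"
    using assms(1) by measurable
  ultimately show ?thesis
    unfolding gagliardo_def
    by (simp add: nn_integral_cmult [symmetric] ennreal_mult [symmetric] mult.assoc)
qed

lemma sum_indicator_disjoint_family_le:
  fixes h :: "nat \<Rightarrow> ennreal"
  assumes "disjoint_family D" and "\<And>k. k < N \<Longrightarrow> x \<in> D k \<Longrightarrow> h k \<le> G"
  shows "(\<Sum>k<N. h k * indicator (D k) x) \<le> G"
proof (cases "\<exists>j<N. x \<in> D j")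
  case True
  then obtain j where "j < N" "x \<in> D j" by blast
  moreover have "disjoint_family_on D {..<N}"
    using assms(1) by (auto simp: disjoint_family_on_def)
  ultimately have "(\<Sum>k<N. h k * indicator (D k) x) = h j"
    by (intro sum_indicator_disjoint_family) auto
  with assms(2) \<open>j < N\<close> \<open>x \<in> D j\<close> show ?thesis by simp
qed simp

lemma ex_less_mem_Suc_Diff:
  assumes "x \<in> A N" "x \<notin> A 0"
  shows "\<exists>k<N. x \<in> A (Suc k) - A k"
  using assms by (induction N) (auto simp: less_Suc_eq)

lemma le_enn2real_if_ennreal_le:
  assumes "ennreal x \<le> y" "y < \<infinity>"
  shows "x \<le> enn2real y"
proof (cases "0 \<le> x")
  case True
  have "enn2real (ennreal x) \<le> enn2real y"
    using assms by (intro enn2real_mono) auto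
  with True show ?thesis by simp
qed (use enn2real_nonneg[of y] in linarith)

text \<open>The factor 1 - (1 - nu^p) / (1 - sp/N) is positive exactly when sp/N < nu^p.\<close>

definition sobolev_level_const :: "'a::euclidean_space itself \<Rightarrow> real \<Rightarrow> real \<Rightarrow> real \<Rightarrow> real" where
  "sobolev_level_const _ (p::real) (s::real) \<nu> = \<nu> powr p / ((1 - \<nu> powr p) * (1 - (1 - \<nu> powr p) / (1 - s * p / DIM('a)))
     * ((2 / unit_ball_vol DIM('a)) powr (-(real DIM('a) + s * p) / DIM('a)) * (\<nu> * (1 - \<nu>)) powr p))"

lemma sobolev_level_const_pos:
  fixes p s \<nu> :: real
  assumes "0 < s" "0 < p" "s * p < DIM('a::euclidean_space)" "0 < \<nu>" "\<nu> < 1" "s * p / DIM('a) < \<nu> powr p"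
  shows "0 < sobolev_level_const TYPE('a) p s \<nu>"
proof -
  have "\<nu> powr p < 1" using assms powr_less_mono2[of p \<nu> 1] by simp
  moreover have "(1 - \<nu> powr p) / (1 - s * p / DIM('a)) < 1"
    using assms by (simp add: divide_less_eq)
  moreover have "unit_ball_vol (real DIM('a)) \<noteq> 0"
    using unit_ball_vol_pos[of "real DIM('a)"] by linarith
  ultimately show ?thesis
    using assms unfolding sobolev_level_const_def by (intro divide_pos_pos mult_pos_pos) auto
qed

locale level_decomposition =
  fixes f :: "'a::euclidean_space \<Rightarrow> real" and M \<nu> :: real
  assumes f_borel [measurable]: "f \<in> borel_measurable lborel"
    and f_nonneg: "\<And>x. 0 \<le> f x" and f_le: "\<And>x. f x \<le> M"
    and support_finite: "emeasure lborel {x. 0 < f x} < \<infinity>"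
    and \<nu>: "0 < \<nu>" "\<nu> < 1"
begin

definition level :: "nat \<Rightarrow> real" where
  "level k = M * \<nu> ^ k"

definition superlevel :: "nat \<Rightarrow> 'a set" where
  "superlevel k = {x. level k < f x}"

definition vol :: "nat \<Rightarrow> real" where
  "vol k = measure lborel (superlevel k)"

lemma M_nonneg: "0 \<le> M"
  using f_nonneg f_le order_trans by blast

lemma level_nonneg: "0 \<le> level k"
  using M_nonneg \<nu> by (simp add: level_def)

lemma level_Suc_le: "level (Suc k) \<le> level k"
  using M_nonneg \<nu> by (simp add: level_def mult_left_mono mult_left_le_one_le)

lemma superlevel_sets [measurable]: "superlevel k \<in> sets lborel"
  unfolding superlevel_def by measurable

lemma superlevel_subset_support: "superlevel k \<subseteq> {x. 0 < f x}"
  using level_nonneg by (auto simp: superlevel_def intro: le_less_trans)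

lemma support_fmeasurable: "{x. 0 < f x} \<in> fmeasurable lborel"
  using support_finite by (simp add: fmeasurable_def)

lemma superlevel_fmeasurable: "superlevel k \<in> fmeasurable lborel"
  using support_fmeasurable superlevel_subset_support superlevel_sets by (rule fmeasurableI2)

lemma superlevel_Suc: "superlevel k \<subseteq> superlevel (Suc k)"
  using level_Suc_le by (auto simp: superlevel_def intro: le_less_trans)

lemma incseq_superlevel: "incseq superlevel"
  using superlevel_Suc by (simp add: incseq_Suc_iff)

lemma superlevel_0: "superlevel 0 = {}"
  using f_le by (auto simp: superlevel_def level_def not_less)

lemma vol_0: "vol 0 = 0"
  by (simp add: vol_def superlevel_0)

lemma incseq_vol: "incseq vol"
  unfolding incseq_def vol_def
  using incseq_superlevel superlevel_sets superlevel_fmeasurable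
  by (blast intro: measure_mono_fmeasurable dest: incseqD)

lemma vol_le_support: "vol k \<le> measure lborel {x. 0 < f x}"
  unfolding vol_def
  using superlevel_subset_support superlevel_sets support_fmeasurable by (rule measure_mono_fmeasurable)

lemma disjoint_family_shells: "disjoint_family (\<lambda>k. superlevel (Suc k) - superlevel k)"
  using superlevel_Suc by (rule disjoint_family_Suc)

lemma emeasure_shell:
  "emeasure lborel (superlevel (Suc k) - superlevel k) = ennreal (vol (Suc k) - vol k)"
proof -
  have "emeasure lborel (superlevel (Suc k) - superlevel k) = ennreal (measure lborel (superlevel (Suc k) - superlevel k))"
    using superlevel_fmeasurable by (intro emeasure_eq_measure2 fmeasurable.Diff)
  also have "measure lborel (superlevel (Suc k) - superlevel k) = vol (Suc k) - vol k"
    unfolding vol_def using superlevel_fmeasurable superlevel_sets superlevel_Suc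
    by (intro measure_Diff) (auto simp: fmeasurable_def less_top)
  finally show ?thesis .
qed

lemma level_sum_le_gagliardo:
  fixes s p :: real
  assumes s: "0 < s" and p: "0 < p"
  shows "ennreal ((2 / unit_ball_vol DIM('a)) powr (-(DIM('a) + s * p) / DIM('a)) * (\<nu> * (1 - \<nu>)) powr p
      * M powr p * (\<Sum>k<N. (\<nu> powr p) ^ k * ((vol (Suc k) - vol k) * vol (Suc (Suc k)) powr (-(s * p / DIM('a))))))
    \<le> gagliardo p s f"
proof -
  define \<beta> where "\<beta> = DIM('a) + s * p"
  define C where "C = (2 / unit_ball_vol DIM('a)) powr (-\<beta> / DIM('a))"
  define D where "D k = superlevel (Suc k) - superlevel k" for k
  define F where "F x y = ennreal (\<bar>f x - f y\<bar> powr p / norm (x - y) powr \<beta>)" for x y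
  define h where "h k = C * (level (Suc k) - level (Suc (Suc k))) powr p * vol (Suc (Suc k)) powr (1 - \<beta> / DIM('a))" for k
  have \<beta>: "0 < \<beta>" using s p by (simp add: \<beta>_def add_pos_pos)
  have h_nonneg: "0 \<le> h k" for k by (simp add: h_def C_def)
  have shell_bound: "ennreal (h k) \<le> (\<integral>\<^sup>+y. F x y \<partial>lborel)" if x: "x \<in> D k" for x k
  proof (cases "vol (Suc (Suc k)) = 0")
    case False
    then have "0 < measure lborel (superlevel (Suc (Suc k)))"
      by (simp add: vol_def order_less_le)
    moreover have "x \<in> superlevel (Suc (Suc k))"
      using x superlevel_Suc by (auto simp: D_def)
    moreover have "ennreal ((level (Suc k) - level (Suc (Suc k))) powr p / norm (x - y) powr \<beta>) \<le> F x y"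
      if "y \<notin> superlevel (Suc (Suc k))" for y
    proof -
      have "level (Suc k) - level (Suc (Suc k)) \<le> \<bar>f x - f y\<bar>"
        using x that by (auto simp: D_def superlevel_def)
      then show ?thesis
        unfolding F_def using level_Suc_le p by (intro ennreal_leI divide_right_mono powr_mono2) auto
    qed
    ultimately show ?thesis
      using superlevel_fmeasurable level_Suc_le \<beta>
        nn_integral_kernel_outside_ge[of "superlevel (Suc (Suc k))" x "(level (Suc k) - level (Suc (Suc k))) powr p" \<beta>]
      by (simp add: h_def C_def vol_def fmeasurable_def mult_ac)
  qed (simp add: h_def)
  have "(\<integral>\<^sup>+x. (\<Sum>k<N. ennreal (h k) * indicator (D k) x) \<partial>lborel) \<le> (\<integral>\<^sup>+x. \<integral>\<^sup>+y. F x y \<partial>lborel \<partial>lborel)"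
    using disjoint_family_shells shell_bound
    by (intro nn_integral_mono sum_indicator_disjoint_family_le) (simp_all add: D_def)
  also have "\<dots> = gagliardo p s f"
    by (simp add: gagliardo_eq_iterated [OF f_borel] F_def \<beta>_def)
  also have "(\<integral>\<^sup>+x. (\<Sum>k<N. ennreal (h k) * indicator (D k) x) \<partial>lborel) = ennreal (\<Sum>k<N. h k * (vol (Suc k) - vol k))"
  proof -
    have "(\<integral>\<^sup>+x. (\<Sum>k<N. ennreal (h k) * indicator (D k) x) \<partial>lborel) = (\<Sum>k<N. ennreal (h k) * emeasure lborel (D k))"
      using superlevel_sets by (subst nn_integral_sum) (auto simp: D_def nn_integral_cmult_indicator)
    then show ?thesis
      using h_nonneg incseq_vol by (simp add: D_def emeasure_shell ennreal_mult [symmetric] incseq_Suc_iff)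
  qed
  also have "(\<Sum>k<N. h k * (vol (Suc k) - vol k)) = C * (\<nu> * (1 - \<nu>)) powr p * M powr p
      * (\<Sum>k<N. (\<nu> powr p) ^ k * ((vol (Suc k) - vol k) * vol (Suc (Suc k)) powr (-(s * p / DIM('a)))))"
  proof -
    have "(level (Suc k) - level (Suc (Suc k))) powr p = M powr p * (\<nu> * (1 - \<nu>)) powr p * (\<nu> powr p) ^ k" for k
    proof -
      have "level (Suc k) - level (Suc (Suc k)) = M * (\<nu> * (1 - \<nu>)) * \<nu> ^ k"
        by (simp add: level_def algebra_simps)
      then show ?thesis
        using M_nonneg \<nu> by (simp add: powr_mult powr_realpow [symmetric] powr_powr mult.commute)
    qed
    moreover have "1 - \<beta> / DIM('a) = -(s * p / DIM('a))"
      by (simp add: \<beta>_def field_simps)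
    ultimately show ?thesis
      by (simp add: h_def sum_distrib_left mult_ac)
  qed
  finally show ?thesis by (simp add: C_def \<beta>_def)
qed

lemma nn_integral_superlevel_le:
  assumes "0 < q"
  shows "(\<integral>\<^sup>+x. ennreal (f x powr q) * indicator (superlevel N) x \<partial>lborel)
    \<le> ennreal (\<Sum>k<N. level k powr q * (vol (Suc k) - vol k))"
proof -
  define D where "D k = superlevel (Suc k) - superlevel k" for k
  have "ennreal (f x powr q) * indicator (superlevel N) x \<le> (\<Sum>k<N. ennreal (level k powr q) * indicator (D k) x)" for x
  proof (cases "x \<in> superlevel N")
    case True
    then obtain k where k: "k < N" "x \<in> D k"
      using ex_less_mem_Suc_Diff[of x superlevel N] superlevel_0 by (auto simp: D_def)
    then have "f x \<le> level k"
      by (simp add: D_def superlevel_def not_less)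
    then have "ennreal (f x powr q) \<le> ennreal (level k powr q)"
      using f_nonneg \<open>0 < q\<close> by (intro ennreal_leI powr_mono2) auto
    moreover have "(\<Sum>k<N. ennreal (level k powr q) * indicator (D k) x) = ennreal (level k powr q)"
      using disjoint_family_shells k
      by (intro sum_indicator_disjoint_family) (auto simp: D_def disjoint_family_on_def)
    ultimately show ?thesis using True by simp
  qed simp
  then have "(\<integral>\<^sup>+x. ennreal (f x powr q) * indicator (superlevel N) x \<partial>lborel)
      \<le> (\<integral>\<^sup>+x. (\<Sum>k<N. ennreal (level k powr q) * indicator (D k) x) \<partial>lborel)"
    by (rule nn_integral_mono)
  also have "\<dots> = (\<Sum>k<N. ennreal (level k powr q) * emeasure lborel (D k))"
    using superlevel_sets by (subst nn_integral_sum) (auto simp: D_def nn_integral_cmult_indicator)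
  also have "\<dots> = ennreal (\<Sum>k<N. level k powr q * (vol (Suc k) - vol k))"
    using incseq_vol by (simp add: D_def emeasure_shell ennreal_mult [symmetric] incseq_Suc_iff)
  finally show ?thesis .
qed

lemma tendsto_nn_integral_superlevel:
  "(\<lambda>N. \<integral>\<^sup>+x. ennreal (f x powr q) * indicator (superlevel N) x \<partial>lborel)
    \<longlonglongrightarrow> (\<integral>\<^sup>+x. ennreal (f x powr q) \<partial>lborel)"
proof (rule nn_integral_LIMSEQ)
  show "incseq (\<lambda>N x. ennreal (f x powr q) * indicator (superlevel N) x)"
    using incseq_superlevel
    by (auto simp: incseq_def le_fun_def indicator_def dest: incseqD)
  show "(\<lambda>x. ennreal (f x powr q) * indicator (superlevel N) x) \<in> borel_measurable lborel" for N
    by measurable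
  fix x
  show "(\<lambda>N. ennreal (f x powr q) * indicator (superlevel N) x) \<longlonglongrightarrow> ennreal (f x powr q)"
  proof (cases "f x = 0")
    case False
    then have "0 < f x" using f_nonneg[of x] by simp
    moreover have "level \<longlonglongrightarrow> M * 0"
      unfolding level_def using \<nu> by (intro tendsto_mult tendsto_const LIMSEQ_power_zero) auto
    ultimately have "eventually (\<lambda>N. x \<in> superlevel N) sequentially"
      unfolding superlevel_def by (auto dest: order_tendstoD)
    then show ?thesis
      by (rule tendsto_eventually [OF eventually_mono]) simp
  qed simp
qed

lemma level_partial_sum_bound:
  fixes s p :: real
  assumes s: "0 < s" and p: "1 < p" and sp: "s * p < DIM('a)" and \<nu>p: "s * p / DIM('a) < \<nu> powr p"
    and finite: "gagliardo p s f < \<infinity>"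
  shows "\<exists>B. \<forall>N. M powr p * (\<Sum>k<N. (\<nu> powr p) ^ k * vol (Suc k) powr (1 - s * p / DIM('a)))
    \<le> sobolev_level_const TYPE('a) p s \<nu> * enn2real (gagliardo p s f) + B * (\<nu> powr p) ^ N"
proof -
  define \<theta> where "\<theta> = s * p / DIM('a)"
  define u where "u = \<nu> powr p"
  define \<kappa> where "\<kappa> = 1 - (1 - u) / (1 - \<theta>)"
  define K where "K = (2 / unit_ball_vol DIM('a)) powr (-(real DIM('a) + s * p) / DIM('a)) * (\<nu> * (1 - \<nu>)) powr p"
  define g where "g = enn2real (gagliardo p s f)"
  define m where "m = measure lborel {x. 0 < f x}"
  define S where "S N = (\<Sum>k<N. u ^ k * vol (Suc k) powr (1 - \<theta>))" for N
  define R where "R N = (\<Sum>k<N. u ^ k * ((vol (Suc k) - vol k) * vol (Suc (Suc k)) powr (-\<theta>)))" for N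
  have \<theta>: "0 < \<theta>" "\<theta> < 1" using s p sp by (simp_all add: \<theta>_def)
  have u: "0 < u" "u < 1" using \<nu> p powr_less_mono2[of p \<nu> 1] by (simp_all add: u_def)
  have \<kappa>: "0 < \<kappa>" using \<theta> \<nu>p by (simp add: \<kappa>_def u_def \<theta>_def divide_less_eq)
  have K: "0 < K"
    using \<nu> unit_ball_vol_pos[of "real DIM('a)"] by (auto simp: K_def simp del: unit_ball_vol_pos)
  have "M powr p * S N \<le> sobolev_level_const TYPE('a) p s \<nu> * g + M powr p * m powr (1 - \<theta>) / (\<kappa> * (1 - \<theta>)) * u ^ N" for N
  proof -
    have "ennreal (K * (M powr p * R N)) \<le> gagliardo p s f"
      using level_sum_le_gagliardo[OF s, of p N] p by (simp add: K_def R_def u_def \<theta>_def mult_ac)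
    then have lower: "K * (M powr p * R N) \<le> g"
      unfolding g_def using finite by (rule le_enn2real_if_ennreal_le)
    have "vol N powr (1 - \<theta>) \<le> m powr (1 - \<theta>)"
      using vol_le_support \<theta> by (intro powr_mono2) (simp_all add: vol_def m_def)
    then have "u ^ N * vol N powr (1 - \<theta>) / (1 - \<theta>) \<le> u ^ N * m powr (1 - \<theta>) / (1 - \<theta>)"
      using u \<theta> by (intro divide_right_mono mult_left_mono) auto
    then have "\<kappa> * S N \<le> u / (1 - u) * R N + u ^ N * m powr (1 - \<theta>) / (1 - \<theta>)"
      using level_sum_estimate[OF incseq_vol vol_0 \<theta> u, of N] unfolding \<kappa>_def S_def R_def by linarith
    then have "M powr p / \<kappa> * (\<kappa> * S N) \<le> M powr p / \<kappa> * (u / (1 - u) * R N + u ^ N * m powr (1 - \<theta>) / (1 - \<theta>))"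
      using \<kappa> by (intro mult_left_mono) auto
    also have "\<dots> = u / ((1 - u) * \<kappa> * K) * (K * (M powr p * R N)) + M powr p * m powr (1 - \<theta>) / (\<kappa> * (1 - \<theta>)) * u ^ N"
      using \<kappa> K by (simp add: distrib_left mult_ac)
    also have "\<dots> \<le> u / ((1 - u) * \<kappa> * K) * g + M powr p * m powr (1 - \<theta>) / (\<kappa> * (1 - \<theta>)) * u ^ N"
      using lower \<kappa> K u by (intro add_right_mono mult_left_mono) simp_all
    also have "u / ((1 - u) * \<kappa> * K) = sobolev_level_const TYPE('a) p s \<nu>"
      by (simp add: sobolev_level_const_def u_def \<kappa>_def \<theta>_def K_def mult_ac)
    finally show ?thesis using \<kappa> by simp
  qed
  then show ?thesis unfolding S_def u_def \<theta>_def g_def by blast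
qed

lemma nn_integral_crit_exp_le:
  fixes s p :: real
  assumes s: "0 < s" and p: "1 < p" and sp: "s * p < DIM('a)" and \<nu>p: "s * p / DIM('a) < \<nu> powr p"
    and finite: "gagliardo p s f < \<infinity>"
  shows "(\<integral>\<^sup>+x. ennreal (f x powr crit_exp TYPE('a) p s) \<partial>lborel)
    \<le> ennreal ((sobolev_level_const TYPE('a) p s \<nu> * enn2real (gagliardo p s f)) powr (crit_exp TYPE('a) p s / p))"
proof -
  define q where "q = crit_exp TYPE('a) p s"
  define r where "r = q / p"
  define \<theta> where "\<theta> = s * p / DIM('a)"
  define u where "u = \<nu> powr p"
  define Cg where "Cg = sobolev_level_const TYPE('a) p s \<nu> * enn2real (gagliardo p s f)"
  define S where "S N = (\<Sum>k<N. u ^ k * vol (Suc k) powr (1 - \<theta>))" for N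
  have q: "q = p * r" and r: "1 \<le> r" and \<theta>r: "(1 - \<theta>) * r = 1"
    using s p sp by (simp_all add: q_def r_def \<theta>_def crit_exp_def field_simps)
  have u: "0 < u" "u < 1" using \<nu> p powr_less_mono2[of p \<nu> 1] by (simp_all add: u_def)
  obtain B where B: "\<And>N. M powr p * S N \<le> Cg + B * u ^ N"
    using level_partial_sum_bound[OF s p sp \<nu>p finite] by (auto simp: S_def Cg_def u_def \<theta>_def)
  have upper: "(\<integral>\<^sup>+x. ennreal (f x powr q) * indicator (superlevel N) x \<partial>lborel)
      \<le> ennreal ((Cg + B * u ^ N) powr r)" for N
  proof -
    have "level k powr q * (vol (Suc k) - vol k) \<le> (M powr p * u ^ k * vol (Suc k) powr (1 - \<theta>)) powr r" for k
    proof -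
      have "level k powr q = (M powr p * u ^ k) powr r"
        using M_nonneg \<nu> by (simp add: q level_def u_def powr_mult powr_powr powr_realpow [symmetric] mult_ac)
      moreover have "vol (Suc k) - vol k \<le> (vol (Suc k) powr (1 - \<theta>)) powr r"
        using \<theta>r measure_nonneg[of lborel "superlevel k"] by (simp add: powr_powr vol_def)
      ultimately show ?thesis
        using M_nonneg u by (simp add: powr_mult mult_left_mono)
    qed
    then have "(\<Sum>k<N. level k powr q * (vol (Suc k) - vol k)) \<le> (\<Sum>k<N. (M powr p * u ^ k * vol (Suc k) powr (1 - \<theta>)) powr r)"
      by (rule sum_mono)
    also have "\<dots> \<le> (M powr p * S N) powr r"
      unfolding S_def sum_distrib_left mult.assoc [symmetric] using u r by (intro sum_powr_le_powr_sum) simp_all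
    also have "\<dots> \<le> (Cg + B * u ^ N) powr r"
      using B[of N] u r by (intro powr_mono2) (auto simp: S_def intro!: sum_nonneg mult_nonneg_nonneg)
    finally show ?thesis
      using nn_integral_superlevel_le[of q N] q p r by (auto elim: order_trans intro: ennreal_leI)
  qed
  have "0 \<le> M powr p * S N" for N
    using u by (simp add: S_def sum_nonneg)
  then have "0 \<le> Cg + B * u ^ N" for N
    using B[of N] by (rule order_trans)
  then have "(\<lambda>N. (Cg + B * u ^ N) powr r) \<longlonglongrightarrow> (Cg + B * 0) powr r"
    using u r by (intro tendsto_powr' tendsto_intros LIMSEQ_power_zero) auto
  then have "(\<lambda>N. ennreal ((Cg + B * u ^ N) powr r)) \<longlonglongrightarrow> ennreal (Cg powr r)"
    by (intro tendsto_ennrealI) simp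
  from LIMSEQ_le[OF tendsto_nn_integral_superlevel this] upper
  show ?thesis unfolding q_def r_def Cg_def by blast
qed

end

lemma nn_integral_pos_part_crit_exp_le:
  fixes \<Omega> :: "'a::euclidean_space set" and p s \<nu> :: real
  assumes s: "0 < s" and p: "1 < p" and sp: "s * p < DIM('a)"
    and \<Omega>: "\<Omega> \<in> sets lborel" "emeasure lborel \<Omega> < \<infinity>"
    and \<nu>: "0 < \<nu>" "\<nu> < 1" and \<nu>p: "s * p / DIM('a) < \<nu> powr p" and u: "u \<in> Xps \<Omega> p s"
  shows "(\<integral>\<^sup>+x. ennreal (max (u x) 0 powr crit_exp TYPE('a) p s) \<partial>lborel)
    \<le> ennreal ((sobolev_level_const TYPE('a) p s \<nu> * enn2real (gagliardo p s u)) powr (crit_exp TYPE('a) p s / p))"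
proof -
  define q where "q = crit_exp TYPE('a) p s"
  define K where "K = sobolev_level_const TYPE('a) p s \<nu>"
  define trunc where "trunc m t = min (max t 0) (real (Suc m))" for m t
  have u_borel [measurable]: "u \<in> borel_measurable lborel" and u_finite: "gagliardo p s u < \<infinity>"
    and u_AE: "AE x in lborel. x \<notin> \<Omega> \<longrightarrow> u x = 0"
    using u by (auto simp: Xps_def)
  have q: "0 < q" using p sp by (simp add: q_def crit_exp_def)
  have K: "0 \<le> K"
    unfolding K_def using s p sp \<nu> \<nu>p by (intro less_imp_le sobolev_level_const_pos) auto
  have trunc_gagliardo: "gagliardo p s (\<lambda>x. trunc m (u x)) \<le> gagliardo p s u" for m
    using p by (intro gagliardo_comp_contraction_le) (auto simp: trunc_def)
  have decomposition: "level_decomposition (\<lambda>x. trunc m (u x)) (Suc m) \<nu>" for m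
  proof
    have "AE x in lborel. x \<in> {x. 0 < trunc m (u x)} \<longrightarrow> x \<in> \<Omega>"
      using u_AE by eventually_elim (auto simp: trunc_def)
    then have "emeasure lborel {x. 0 < trunc m (u x)} \<le> emeasure lborel \<Omega>"
      using \<Omega> by (intro emeasure_mono_AE) (auto simp: trunc_def)
    with \<Omega> show "emeasure lborel {x. 0 < trunc m (u x)} < \<infinity>"
      by (simp add: le_less_trans)
  qed (auto simp: trunc_def \<nu>)
  have bound: "(\<integral>\<^sup>+x. ennreal (trunc m (u x) powr q) \<partial>lborel)
      \<le> ennreal ((K * enn2real (gagliardo p s u)) powr (q / p))" for m
  proof -
    have "(\<integral>\<^sup>+x. ennreal (trunc m (u x) powr q) \<partial>lborel)
        \<le> ennreal ((K * enn2real (gagliardo p s (\<lambda>x. trunc m (u x)))) powr (q / p))"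
      unfolding q_def K_def using decomposition trunc_gagliardo u_finite s p sp \<nu>p
      by (intro level_decomposition.nn_integral_crit_exp_le) (auto intro: le_less_trans)
    also have "\<dots> \<le> ennreal ((K * enn2real (gagliardo p s u)) powr (q / p))"
      using trunc_gagliardo u_finite K q p
      by (intro ennreal_leI powr_mono2 mult_left_mono enn2real_mono) auto
    finally show ?thesis .
  qed
  have "(\<lambda>m. \<integral>\<^sup>+x. ennreal (trunc m (u x) powr q) \<partial>lborel) \<longlonglongrightarrow> (\<integral>\<^sup>+x. ennreal (max (u x) 0 powr q) \<partial>lborel)"
  proof (rule nn_integral_LIMSEQ)
    show "incseq (\<lambda>m x. ennreal (trunc m (u x) powr q))"
      using q by (auto simp: incseq_def le_fun_def trunc_def intro!: ennreal_leI powr_mono2)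
    show "(\<lambda>x. ennreal (trunc m (u x) powr q)) \<in> borel_measurable lborel" for m
      by (simp add: trunc_def)
    fix x
    obtain m :: nat where "max (u x) 0 \<le> real m" using real_arch_simple by blast
    then have "eventually (\<lambda>m. ennreal (trunc m (u x) powr q) = ennreal (max (u x) 0 powr q)) sequentially"
      unfolding eventually_sequentially by (intro exI[of _ m]) (auto simp: trunc_def)
    then show "(\<lambda>m. ennreal (trunc m (u x) powr q)) \<longlonglongrightarrow> ennreal (max (u x) 0 powr q)"
      by (rule tendsto_eventually)
  qed
  from LIMSEQ_le[OF this tendsto_const] bound show ?thesis
    unfolding q_def K_def by blast
qed

lemma Xnorm_powr: "0 < p \<Longrightarrow> Xnorm p s u powr p = enn2real (gagliardo p s u)"
  by (simp add: Xnorm_def powr_powr)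

lemma fractional_sobolev_pos_part:
  fixes \<Omega> :: "'a::euclidean_space set" and p s :: real
  assumes s: "0 < s" and p: "1 < p" and sp: "s * p < DIM('a)"
    and \<Omega>: "\<Omega> \<in> sets lborel" "emeasure lborel \<Omega> < \<infinity>"
  shows "\<exists>C\<ge>0. \<forall>u\<in>Xps \<Omega> p s.
    (LINT x:\<Omega>|lborel. max (u x) 0 powr crit_exp TYPE('a) p s) \<le> C * Xnorm p s u powr crit_exp TYPE('a) p s"
proof -
  define q where "q = crit_exp TYPE('a) p s"
  define \<theta> where "\<theta> = s * p / DIM('a)"
  define \<nu> where "\<nu> = ((1 + \<theta>) / 2) powr (1 / p)"
  define K where "K = sobolev_level_const TYPE('a) p s \<nu>"
  have \<theta>: "0 < \<theta>" "\<theta> < 1" using s p sp by (simp_all add: \<theta>_def)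
  have "\<nu> powr p = (1 + \<theta>) / 2" using \<theta> p by (simp add: \<nu>_def powr_powr)
  then have "\<theta> < \<nu> powr p" using \<theta> by (simp add: field_simps)
  then have \<nu>p: "s * p / DIM('a) < \<nu> powr p" by (simp add: \<theta>_def)
  have \<nu>: "0 < \<nu>" "\<nu> < 1"
    using \<theta> p powr_less_mono2[of "1 / p" "(1 + \<theta>) / 2" 1] by (simp_all add: \<nu>_def)
  have K: "0 \<le> K"
    unfolding K_def using s p sp \<nu> \<nu>p by (intro less_imp_le sobolev_level_const_pos) auto
  have "(LINT x:\<Omega>|lborel. max (u x) 0 powr q) \<le> K powr (q / p) * Xnorm p s u powr q" if u: "u \<in> Xps \<Omega> p s" for u
  proof -
    have "(LINT x:\<Omega>|lborel. max (u x) 0 powr q) \<le> (K * enn2real (gagliardo p s u)) powr (q / p)"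
      unfolding set_lebesgue_integral_def
    proof (rule integral_real_bounded)
      have "(\<integral>\<^sup>+x. ennreal (indicator \<Omega> x *\<^sub>R max (u x) 0 powr q) \<partial>lborel)
          \<le> (\<integral>\<^sup>+x. ennreal (max (u x) 0 powr q) \<partial>lborel)"
        by (intro nn_integral_mono ennreal_leI) (simp split: split_indicator)
      also have "\<dots> \<le> ennreal ((K * enn2real (gagliardo p s u)) powr (q / p))"
        unfolding q_def K_def using s p sp \<Omega> \<nu> \<nu>p u by (rule nn_integral_pos_part_crit_exp_le)
      finally show "(\<integral>\<^sup>+x. ennreal (indicator \<Omega> x *\<^sub>R max (u x) 0 powr q) \<partial>lborel)
          \<le> ennreal ((K * enn2real (gagliardo p s u)) powr (q / p))" .
    qed simp
    also have "\<dots> = K powr (q / p) * Xnorm p s u powr q"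
      using K p by (simp add: Xnorm_powr [symmetric] powr_mult powr_powr)
    finally show ?thesis .
  qed
  with K show ?thesis unfolding q_def by (intro exI[of _ "K powr (crit_exp TYPE('a) p s / p)"]) auto
qed

lemma Xps_cmult:
  assumes u: "u \<in> Xps \<Omega> p s" and c: "0 < c"
  shows "(\<lambda>x. c * u x) \<in> Xps \<Omega> p s"
proof -
  have "\<bar>c * u x\<bar> powr p = c powr p * \<bar>u x\<bar> powr p" for x
    using c by (simp add: abs_mult powr_mult)
  then have "integrable lborel (\<lambda>x. \<bar>c * u x\<bar> powr p)"
    using u by (simp add: Xps_def)
  moreover have "gagliardo p s (\<lambda>x. c * u x) < \<infinity>"
    using u c by (simp add: Xps_def gagliardo_cmult ennreal_mult_less_top)
  ultimately show ?thesis using u by (auto simp: Xps_def)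
qed

lemma Aop_cmult: "Aop p s \<phi> (\<lambda>x. c * u x) = c * Aop p s \<phi> u"
  unfolding Aop_def integral_mult_right_zero [symmetric]
  by (rule Bochner_Integration.integral_cong) (simp_all add: algebra_simps)

lemma Lpp_cmult: "0 < c \<Longrightarrow> Lpp \<Omega> p (\<lambda>x. c * u x) = c powr p * Lpp \<Omega> p u"
  by (simp add: Lpp_def abs_mult powr_mult)

lemma Lpp_nonneg: "0 \<le> Lpp \<Omega> p u"
  unfolding Lpp_def set_lebesgue_integral_def by (intro integral_nonneg_AE) simp

lemma lambda_star_mult_Lpp_le:
  assumes p: "0 < p" and u: "u \<in> Wsp \<Omega> p s \<phi>"
  shows "lambda_star \<Omega> p s \<phi> * Lpp \<Omega> p u \<le> Xnorm p s u powr p"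
proof (cases "Lpp \<Omega> p u = 0")
  case False
  define L where "L = Lpp \<Omega> p u"
  define c where "c = L powr (-1 / p)"
  have L: "0 < L" using False Lpp_nonneg[of \<Omega> p u] by (simp add: L_def)
  have c: "0 < c" using L by (simp add: c_def)
  have "c powr p = L powr (-1 / p * p)"
    unfolding c_def powr_powr ..
  then have cp: "c powr p = 1 / L"
    using L p by (simp add: powr_minus_divide)
  have u_borel: "u \<in> borel_measurable lborel" and uX: "u \<in> Xps \<Omega> p s" and uA: "Aop p s \<phi> u = 0"
    using u by (auto simp: Wsp_def Xps_def)
  have "(\<lambda>x. c * u x) \<in> Wsp \<Omega> p s \<phi>"
    using Xps_cmult[OF uX c] uA by (simp add: Wsp_def Aop_cmult)
  moreover have "Lpp \<Omega> p (\<lambda>x. c * u x) = 1"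
    using c cp L by (simp add: Lpp_cmult L_def)
  ultimately have "lambda_star \<Omega> p s \<phi> \<le> Xnorm p s (\<lambda>x. c * u x) powr p"
    unfolding lambda_star_def by (intro cInf_lower bdd_belowI[of _ 0]) auto
  also have "\<dots> = Xnorm p s u powr p / L"
    using p c cp L u_borel by (simp add: Xnorm_powr gagliardo_cmult enn2real_mult)
  finally show ?thesis using L by (simp add: L_def field_simps)
qed simp

lemma lambda1_nonneg:
  assumes "first_eigenfunction \<Omega> p s \<phi>"
  shows "0 \<le> lambda1 \<Omega> p s"
  unfolding lambda1_def
proof (rule cInf_greatest)
  show "{Xnorm p s u powr p |u. u \<in> Xps \<Omega> p s \<and> Lpp \<Omega> p u = 1} \<noteq> {}"
    using assms by (auto simp: first_eigenfunction_def)
qed auto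

lemma Ifun_ge_on_Wsp:
  fixes \<Omega> :: "'a::euclidean_space set" and p s q lam a b C :: real
  assumes p: "0 < p" and "0 \<le> lam" "0 \<le> q" "0 \<le> a" "0 \<le> b" "0 \<le> crit_exp TYPE('a) p s"
    and \<lambda>: "0 < lambda_star \<Omega> p s \<phi>" and u: "u \<in> Wsp \<Omega> p s \<phi>"
    and sobolev: "(LINT x:\<Omega>|lborel. max (u x) 0 powr crit_exp TYPE('a) p s) \<le> C * Xnorm p s u powr crit_exp TYPE('a) p s"
  shows "(1 - a / lambda_star \<Omega> p s \<phi>) / p * Xnorm p s u powr p
      - b / crit_exp TYPE('a) p s * C * Xnorm p s u powr crit_exp TYPE('a) p s \<le> Ifun \<Omega> p s q lam a b u"
proof -
  define X where "X = Xnorm p s u powr p"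
  have "0 \<le> lam / q * (LINT x:\<Omega>|lborel. \<bar>u x\<bar> powr q)"
    unfolding set_lebesgue_integral_def using assms by (intro mult_nonneg_nonneg integral_nonneg_AE) auto
  moreover have "a / p * Lpp \<Omega> p u \<le> a / p * (X / lambda_star \<Omega> p s \<phi>)"
    using lambda_star_mult_Lpp_le[OF p u] \<lambda> assms by (intro mult_left_mono) (simp_all add: X_def field_simps)
  moreover have "b / crit_exp TYPE('a) p s * (LINT x:\<Omega>|lborel. max (u x) 0 powr crit_exp TYPE('a) p s)
      \<le> b / crit_exp TYPE('a) p s * (C * Xnorm p s u powr crit_exp TYPE('a) p s)"
    using sobolev assms by (intro mult_left_mono) auto
  moreover have "(1 - a / lambda_star \<Omega> p s \<phi>) / p * X = X / p - a / p * (X / lambda_star \<Omega> p s \<phi>)"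
    using p \<lambda> by (simp add: field_simps)
  moreover have "Ifun \<Omega> p s q lam a b u = X / p + lam / q * (LINT x:\<Omega>|lborel. \<bar>u x\<bar> powr q) - a / p * Lpp \<Omega> p u
      - b / crit_exp TYPE('a) p s * (LINT x:\<Omega>|lborel. max (u x) 0 powr crit_exp TYPE('a) p s)"
    by (simp add: Ifun_def Lpp_def X_def)
  ultimately show ?thesis
    unfolding X_def by (simp add: mult.assoc)
qed

lemma exists_pos_powr_less:
  fixes c0 c1 p e :: real
  assumes "0 < c0" "0 \<le> c1" "p < e"
  shows "\<exists>\<rho>>0. c1 * \<rho> powr e < c0 * \<rho> powr p"
proof -
  define \<rho> where "\<rho> = (c0 / (c1 + 1)) powr (1 / (e - p))"
  have \<rho>: "0 < \<rho>" using assms by (simp add: \<rho>_def)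
  have "\<rho> powr (e - p) = c0 / (c1 + 1)"
    using assms by (simp add: \<rho>_def powr_powr)
  then have "c1 * \<rho> powr e = c1 * c0 / (c1 + 1) * \<rho> powr p"
    using \<rho> by (simp add: powr_diff field_simps)
  also have "\<dots> < c0 * \<rho> powr p"
    using assms \<rho> by (intro mult_strict_right_mono) (simp_all add: field_simps)
  finally show ?thesis using \<rho> by blast
qed

theorem proposition5p2:
  fixes \<Omega> :: "'a::euclidean_space set" and p s q lam a b :: real and \<phi>1 :: "'a \<Rightarrow> real"
  assumes "smooth_bounded_domain \<Omega>"
    and "0 < s" and "s < 1" and "1 < p" and "real DIM('a) > s * p"
    and "first_eigenfunction \<Omega> p s \<phi>1"
    and "lam > 0" and "b > 0" and "1 < q" and "q < p"
    and "lambda1 \<Omega> p s < a" and "a < lambda_star \<Omega> p s \<phi>1"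
  shows "\<exists>\<alpha>>0. \<exists>\<rho>>0. \<forall>u\<in>Wsp \<Omega> p s \<phi>1. Xnorm p s u = \<rho> \<longrightarrow> Ifun \<Omega> p s q lam a b u \<ge> \<alpha>"
proof -
  define p' where "p' = crit_exp TYPE('a) p s"
  have p': "p < p'"
    using assms(2-5) by (simp add: p'_def crit_exp_def field_simps)
  have "\<Omega> \<in> sets lborel" "emeasure lborel \<Omega> < \<infinity>"
    using assms(1) emeasure_bounded_finite by (auto simp: smooth_bounded_domain_def)
  then obtain C where C: "0 \<le> C" and sobolev: "\<And>u. u \<in> Xps \<Omega> p s \<Longrightarrow>
      (LINT x:\<Omega>|lborel. max (u x) 0 powr p') \<le> C * Xnorm p s u powr p'"
    using fractional_sobolev_pos_part[of s p] assms(2,4,5) unfolding p'_def by blast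
  have a: "0 < a" using lambda1_nonneg[OF assms(6)] assms(11) by simp
  define c0 where "c0 = (1 - a / lambda_star \<Omega> p s \<phi>1) / p"
  define c1 where "c1 = b / p' * C"
  have "0 < c0" "0 \<le> c1"
    using a assms(4,8,12) p' C by (simp_all add: c0_def c1_def)
  then obtain \<rho> where \<rho>: "0 < \<rho>" "c1 * \<rho> powr p' < c0 * \<rho> powr p"
    using exists_pos_powr_less p' by blast
  have "c0 * \<rho> powr p - c1 * \<rho> powr p' \<le> Ifun \<Omega> p s q lam a b u"
    if "u \<in> Wsp \<Omega> p s \<phi>1" "Xnorm p s u = \<rho>" for u
    using that Ifun_ge_on_Wsp[of p lam q a b s \<Omega> \<phi>1 u C] sobolev[of u] a assms(4,7-9,12) p'
    by (simp add: Wsp_def c0_def c1_def p'_def)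
  with \<rho> show ?thesis
    by (intro exI[of _ "c0 * \<rho> powr p - c1 * \<rho> powr p'"] conjI exI[of _ \<rho>]) auto
qed

end
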